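(* Let $0<\rho<1$, $n\geq1$, $m\geq2$, $a_{1},\ldots,a_{m}>0$ with $\sum_{i}a_{i}=1$, and let $\Omega_{1},\ldots,\Omega_{m}\subset\mathbb{R}^{n+1}$ be measurable sets forming a partition of $\mathbb{R}^{n+1}$ with $\gamma_{n+1}(\Omega_{i})=a_{i}$ that maximize $\sum_{i=1}^{m}\int_{\mathbb{R}^{n+1}}1_{\Omega_{i}}T_{\rho}1_{\Omega_{i}}\gamma_{n+1}\,dx$ among such partitions. Then for all $1\leq i<j\leq m$ there exists $c_{ij}\in\mathbb{R}$ such that $$T_{\rho}(1_{\Omega_{i}}-1_{\Omega_{j}})(x)=c_{ij},\qquad\forall\,x\in\Sigma_{ij}.$$
   Context: $\gamma_{n+1}(x)=(2\pi)^{-(n+1)/2}e^{-\|x\|^{2}/2}$, $\gamma_{n+1}(\Omega)=\int_{\Omega}\gamma_{n+1}$; $T_{\rho}f(x)=\int_{\mathbb{R}^{n+1}}f(x\rho+y\sqrt{1-\rho^{2}})\gamma_{n+1}(y)\,dy$. For a set $\Omega$ of locally finite surface area (so that $\nabla1_{\Omega}$ is a vector-valued Radon measure), the reduced boundary $\partial^{*}\Omega$ is the set of $x$ such that $N(x)=-\lim_{r\to0^{+}}\nabla1_{\Omega}(B(x,r))/\|\nabla1_{\Omega}\|(B(x,r))$ exists and is a unit vector. $\Sigma_{ij}=(\partial^{*}\Omega_{i})\cap(\partial^{*}\Omega_{j})$. *)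

theory Defs
  imports "HOL-Analysis.Analysis"
begin

definition gauss_dens :: "'a::euclidean_space \<Rightarrow> real" where
  "gauss_dens x = (2 * pi) powr (- real DIM('a) / 2) * exp (- (norm x)\<^sup>2 / 2)"

definition gauss_measure :: "'a::euclidean_space set \<Rightarrow> real" where
  "gauss_measure \<Omega> = (\<integral>x. indicator \<Omega> x * gauss_dens x \<partial>lebesgue)"

definition ou_op :: "real \<Rightarrow> ('a::euclidean_space \<Rightarrow> real) \<Rightarrow> 'a \<Rightarrow> real" where
  "ou_op \<rho> f x = (\<integral>y. f (\<rho> *\<^sub>R x + sqrt (1 - \<rho>\<^sup>2) *\<^sub>R y) * gauss_dens y \<partial>lebesgue)"

definition noise_stab :: "real \<Rightarrow> nat \<Rightarrow> (nat \<Rightarrow> 'a::euclidean_space set) \<Rightarrow> real" where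
  "noise_stab \<rho> m \<Omega> = (\<Sum>i<m. \<integral>x. indicator (\<Omega> i) x * ou_op \<rho> (indicator (\<Omega> i)) x * gauss_dens x \<partial>lebesgue)"

definition is_partition :: "nat \<Rightarrow> (nat \<Rightarrow> 'a::euclidean_space set) \<Rightarrow> bool" where
  "is_partition m \<Omega> \<longleftrightarrow> (\<forall>i<m. \<Omega> i \<in> sets lebesgue)
     \<and> (\<forall>i<m. \<forall>j<m. i \<noteq> j \<longrightarrow> \<Omega> i \<inter> \<Omega> j = {})
     \<and> (\<Union>i<m. \<Omega> i) = UNIV"

definition C1c_field :: "('a::euclidean_space \<Rightarrow> 'a) \<Rightarrow> ('a \<Rightarrow> 'a \<Rightarrow>\<^sub>L 'a) \<Rightarrow> bool" where
  "C1c_field \<phi> \<phi>' \<longleftrightarrow> (\<forall>x. (\<phi> has_derivative blinfun_apply (\<phi>' x)) (at x))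
     \<and> continuous_on UNIV \<phi>' \<and> compact (closure {x. \<phi> x \<noteq> 0})"

definition divergence :: "('a::euclidean_space \<Rightarrow> 'a \<Rightarrow>\<^sub>L 'a) \<Rightarrow> 'a \<Rightarrow> real" where
  "divergence \<phi>' x = (\<Sum>b\<in>Basis. blinfun_apply (\<phi>' x) b \<bullet> b)"

text \<open>gradient_rep Omega mu sigma: the distributional gradient of 1_Omega is the vector-valued
  Radon measure sigma mu, i.e. mu is a locally finite Borel measure (= total variation),
  |sigma| = 1 mu-a.e., and  int phi . d(grad 1_Omega) = - int_Omega div phi  for all C^1_c fields.
  Omega has locally finite surface area iff such a representation exists.\<close>
definition gradient_rep :: "'a::euclidean_space set \<Rightarrow> 'a measure \<Rightarrow> ('a \<Rightarrow> 'a) \<Rightarrow> bool" where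
  "gradient_rep \<Omega> \<mu> \<sigma> \<longleftrightarrow> sets \<mu> = sets borel
     \<and> (\<forall>K. compact K \<longrightarrow> emeasure \<mu> K < \<infinity>)
     \<and> \<sigma> \<in> borel_measurable \<mu>
     \<and> (AE x in \<mu>. norm (\<sigma> x) = 1)
     \<and> (\<forall>\<phi> \<phi>'. C1c_field \<phi> \<phi>' \<longrightarrow>
          (\<integral>x. \<phi> x \<bullet> \<sigma> x \<partial>\<mu>) = - (\<integral>x. indicator \<Omega> x * divergence \<phi>' x \<partial>lebesgue))"

definition reduced_boundary :: "'a::euclidean_space set \<Rightarrow> 'a set" where
  "reduced_boundary \<Omega> = {x. \<exists>\<mu> \<sigma>. gradient_rep \<Omega> \<mu> \<sigma> \<and>
     (\<exists>N. norm N = 1 \<and>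
       ((\<lambda>r. - ((1 / measure \<mu> (ball x r)) *\<^sub>R (\<integral>y. indicator (ball x r) y *\<^sub>R \<sigma> y \<partial>\<mu>))) \<longlongrightarrow> N)
         (at_right 0))}"

end

theory Submission
  imports Defs "HOL-Probability.Distributions"
begin

(* Suppose T_rho (1_Omega_i - 1_Omega_j) were larger at a point x1 of the reduced boundary of
   Omega_j than at a point x2 of the reduced boundary of Omega_i. Move a small Gaussian mass t
   from Omega_j near x1 into Omega_i, and the same mass from Omega_i near x2 into Omega_j. Since
   T_rho is self-adjoint for the Gaussian measure, the objective changes by
   2 <g, T_rho (1_Omega_i - 1_Omega_j)> + 2 <g, T_rho g>, where g = 1_A - 1_B is the exchanged
   mass. By continuity of T_rho (1_Omega_i - 1_Omega_j) the first term is at least a fixed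
   multiple of t, while the second is O(t^2) because g lives in a bounded region; for small t
   this contradicts maximality. Hence the value at x1 is at most the value at x2, and by symmetry
   T_rho (1_Omega_i - 1_Omega_j) is constant on Sigma_ij.
   Reduced boundary points enter only through the fact that every ball around them meets the set
   in positive measure: otherwise the distributional gradient would vanish on small balls,
   forcing the normal to be 0. *)

section \<open>Gaussian density and Gaussian measure\<close>

lemma gauss_dens_eq_prod_std_normal:
  "gauss_dens (x::'a::euclidean_space) = (\<Prod>b\<in>Basis. std_normal_density (x \<bullet> b))"
proof -
  have "(norm x)\<^sup>2 = (\<Sum>b\<in>Basis. (x \<bullet> b)\<^sup>2)"
    unfolding power2_norm_eq_inner euclidean_inner[of x x] by (simp add: power2_eq_square)
  then have "- (norm x)\<^sup>2 / 2 = (\<Sum>b\<in>Basis. - (x \<bullet> b)\<^sup>2 / 2)"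
    by (simp add: sum_negf sum_divide_distrib)
  then have "exp (- (norm x)\<^sup>2 / 2) = (\<Prod>b\<in>Basis. exp (- (x \<bullet> b)\<^sup>2 / 2))"
    by (simp add: exp_sum)
  moreover have "(2 * pi) powr (- real DIM('a) / 2) = (1 / sqrt (2 * pi)) ^ DIM('a)"
    by (simp add: powr_minus_divide powr_divide powr_half_sqrt[symmetric] powr_realpow[symmetric] powr_powr)
  moreover have "(\<Prod>b\<in>Basis. std_normal_density (x \<bullet> b)) =
      (1 / sqrt (2 * pi)) ^ DIM('a) * (\<Prod>b\<in>Basis. exp (- (x \<bullet> b)\<^sup>2 / 2))"
    by (simp only: std_normal_density_def prod.distrib prod_constant)
  ultimately show ?thesis
    by (simp add: gauss_dens_def)
qed

lemma gauss_dens_neq_0 [simp]: "gauss_dens x \<noteq> 0"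
  by (simp add: gauss_dens_def)

lemma gauss_dens_nonneg [simp]: "0 \<le> gauss_dens x"
  by (simp add: gauss_dens_def)

lemma gauss_dens_eq: "gauss_dens (x::'a::euclidean_space) = gauss_dens (0::'a) * exp (- (norm x)\<^sup>2 / 2)"
  by (simp add: gauss_dens_def)

lemma continuous_on_gauss_dens: "continuous_on UNIV gauss_dens"
  unfolding gauss_dens_def[abs_def] by (intro continuous_intros) auto

lemma borel_measurable_gauss_dens [measurable]: "gauss_dens \<in> borel_measurable borel"
  by (intro borel_measurable_continuous_onI continuous_on_gauss_dens)

lemma lebesgue_measurable_gauss_dens [measurable]: "gauss_dens \<in> borel_measurable lebesgue"
  by (rule measurable_completion) measurable

lemma lebesgue_measurable_ident [measurable]: "(\<lambda>x::'a::euclidean_space. x) \<in> borel_measurable lebesgue"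
  using id_borel_measurable_lebesgue by (simp add: id_def)

lemma has_bochner_integral_gauss_dens_lborel:
  "has_bochner_integral lborel (gauss_dens :: 'a::euclidean_space \<Rightarrow> real) 1"
proof (rule has_bochner_integral_nn_integral)
  have "(\<integral>\<^sup>+x. ennreal (gauss_dens (x::'a)) \<partial>lborel) =
      (\<integral>\<^sup>+x. (\<Prod>b\<in>Basis. ennreal (std_normal_density ((x::'a) \<bullet> b))) \<partial>lborel)"
    by (simp add: gauss_dens_eq_prod_std_normal prod_ennreal)
  also have "\<dots> = (\<Prod>b\<in>(Basis::'a set). \<integral>\<^sup>+t. ennreal (std_normal_density t) \<partial>lborel)"
    by (rule nn_integral_lborel_prod) auto
  also have "\<dots> = 1"
    by (simp add: nn_integral_eq_integral)
  finally show "(\<integral>\<^sup>+x. ennreal (gauss_dens (x::'a)) \<partial>lborel) = ennreal 1"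
    by simp
qed auto

lemma integrable_gauss_dens: "integrable lebesgue (gauss_dens :: 'a::euclidean_space \<Rightarrow> real)"
  using has_bochner_integral_gauss_dens_lborel[where 'a='a]
  by (simp add: integrable_completion has_bochner_integral_iff)

lemma integral_gauss_dens: "(\<integral>x. gauss_dens (x::'a::euclidean_space) \<partial>lebesgue) = 1"
  using has_bochner_integral_gauss_dens_lborel[where 'a='a]
  by (simp add: integral_completion has_bochner_integral_iff)

lemma integrable_indicator_gauss_dens:
  fixes S :: "'a::euclidean_space set"
  assumes [measurable]: "S \<in> sets lebesgue"
  shows "integrable lebesgue (\<lambda>y. indicator S y * gauss_dens y)"
  by (rule Bochner_Integration.integrable_bound[OF integrable_gauss_dens])
    (auto simp: indicator_def)

lemma integral_abs_indicator_diff_gauss_dens: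
  fixes A B :: "'a::euclidean_space set"
  assumes [measurable]: "A \<in> sets lebesgue" "B \<in> sets lebesgue" and "A \<inter> B = {}"
  shows "(\<integral>y. \<bar>indicator A y - indicator B y\<bar> * gauss_dens y \<partial>lebesgue) = gauss_measure A + gauss_measure B"
proof -
  have "(\<integral>y. \<bar>indicator A y - indicator B y\<bar> * gauss_dens y \<partial>lebesgue) =
      (\<integral>y. indicator A y * gauss_dens y + indicator B y * gauss_dens y \<partial>lebesgue)"
    using assms(3) by (intro Bochner_Integration.integral_cong) (auto simp: indicator_def)
  then show ?thesis
    using integrable_indicator_gauss_dens[of A] integrable_indicator_gauss_dens[of B]
    by (simp add: gauss_measure_def)
qed

lemma gauss_measure_pos:
  fixes S :: "'a::euclidean_space set"
  assumes S: "S \<in> sets lebesgue" and not_null: "S \<notin> null_sets lebesgue"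
  shows "0 < gauss_measure S"
proof (rule ccontr)
  assume "\<not> 0 < gauss_measure S"
  moreover have "0 \<le> gauss_measure S"
    unfolding gauss_measure_def by (intro integral_nonneg_AE AE_I2) simp
  ultimately have "(\<integral>y. indicator S y * gauss_dens y \<partial>lebesgue) = 0"
    unfolding gauss_measure_def by simp
  then have "AE y in lebesgue. indicator S y * gauss_dens y = 0"
    using integral_nonneg_eq_0_iff_AE[OF integrable_indicator_gauss_dens[OF S]] by simp
  then have "AE y in lebesgue. y \<notin> S"
    by eventually_elim (simp add: indicator_def)
  with S not_null show False
    using AE_iff_null_sets by blast
qed

lemma continuous_on_gauss_measure_ball:
  fixes S :: "'a::euclidean_space set"
  assumes [measurable]: "S \<in> sets lebesgue"
  shows "continuous_on UNIV (\<lambda>\<epsilon>. gauss_measure (S \<inter> ball x \<epsilon>))"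
proof (intro continuous_at_imp_continuous_on ballI continuous_at_sequentiallyI)
  fix \<epsilon> :: real and X assume X: "X \<longlonglongrightarrow> \<epsilon>"
  have "AE y in lebesgue. y \<notin> sphere x \<epsilon>"
    using negligible_sphere negligible_iff_null_sets AE_not_in by blast
  have "(\<lambda>n. \<integral>y. indicator (S \<inter> ball x (X n)) y * gauss_dens y \<partial>lebesgue) \<longlonglongrightarrow>
      (\<integral>y. indicator (S \<inter> ball x \<epsilon>) y * gauss_dens y \<partial>lebesgue)"
  proof (rule integral_dominated_convergence[where w=gauss_dens])
    show "AE y in lebesgue. (\<lambda>n. indicator (S \<inter> ball x (X n)) y * gauss_dens y) \<longlonglongrightarrow>
        indicator (S \<inter> ball x \<epsilon>) y * gauss_dens y"
      using \<open>AE y in lebesgue. y \<notin> sphere x \<epsilon>\<close>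
    proof eventually_elim
      case (elim y)
      then consider "dist x y < \<epsilon>" | "\<epsilon> < dist x y"
        by (cases "dist x y" \<epsilon> rule: linorder_cases) auto
      then have "eventually (\<lambda>n. indicator (S \<inter> ball x (X n)) y * gauss_dens y =
          indicator (S \<inter> ball x \<epsilon>) y * gauss_dens y) sequentially"
      proof cases
        case 1
        show ?thesis
          using order_tendstoD(1)[OF X 1] by eventually_elim (use 1 in \<open>auto simp: indicator_def\<close>)
      next
        case 2
        show ?thesis
          using order_tendstoD(2)[OF X 2] by eventually_elim (use 2 in \<open>auto simp: indicator_def\<close>)
      qed
      then show ?case by (rule tendsto_eventually)
    qed
  qed (simp_all add: integrable_gauss_dens indicator_def)
  then show "(\<lambda>n. gauss_measure (S \<inter> ball x (X n))) \<longlonglongrightarrow> gauss_measure (S \<inter> ball x \<epsilon>)"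
    unfolding gauss_measure_def .
qed

lemma exists_radius_gauss_measure_ball_eq:
  fixes S :: "'a::euclidean_space set"
  assumes "S \<in> sets lebesgue" and "0 \<le> r" and "0 \<le> t" "t \<le> gauss_measure (S \<inter> ball x r)"
  shows "\<exists>\<epsilon>. 0 \<le> \<epsilon> \<and> \<epsilon> \<le> r \<and> gauss_measure (S \<inter> ball x \<epsilon>) = t"
proof -
  have "gauss_measure (S \<inter> ball x 0) = 0"
    by (simp add: gauss_measure_def)
  then show ?thesis
    using IVT'[of "\<lambda>\<epsilon>. gauss_measure (S \<inter> ball x \<epsilon>)" 0 t r] assms
      continuous_on_subset[OF continuous_on_gauss_measure_ball[OF assms(1), of x]] by auto
qed

lemma lebesgue_affine_scaleR:
  fixes t :: "'a::euclidean_space"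
  assumes "c \<noteq> 0"
  shows "lebesgue = density (distr lebesgue lebesgue (\<lambda>x. t + c *\<^sub>R x)) (\<lambda>_. \<bar>c\<bar> ^ DIM('a))"
    and "(\<lambda>x. t + c *\<^sub>R x) \<in> lebesgue \<rightarrow>\<^sub>M lebesgue"
  using lebesgue_affine_euclidean[where c="\<lambda>_::'a. c" and t=t]
    lebesgue_affine_measurable[where c="\<lambda>_::'a. c" and t=t] assms
  unfolding scaleR_scaleR[symmetric] scaleR_sum_right[symmetric] euclidean_representation prod_constant
  by simp_all

lemma
  fixes t :: "'a::euclidean_space" and f :: "'a \<Rightarrow> real"
  assumes "c \<noteq> 0" and [measurable]: "f \<in> borel_measurable lebesgue"
  shows integral_lebesgue_affine:
      "(\<integral>x. f x \<partial>lebesgue) = \<bar>c\<bar> ^ DIM('a) * (\<integral>y. f (t + c *\<^sub>R y) \<partial>lebesgue)"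
    and integrable_lebesgue_affine_iff:
      "integrable lebesgue f \<longleftrightarrow> integrable lebesgue (\<lambda>y. f (t + c *\<^sub>R y))"
proof -
  note affine = lebesgue_affine_scaleR[OF assms(1), of t]
  show "(\<integral>x. f x \<partial>lebesgue) = \<bar>c\<bar> ^ DIM('a) * (\<integral>y. f (t + c *\<^sub>R y) \<partial>lebesgue)"
    by (subst affine(1)) (use affine(2) in \<open>simp add: integral_density integral_distr\<close>)
  show "integrable lebesgue f \<longleftrightarrow> integrable lebesgue (\<lambda>y. f (t + c *\<^sub>R y))"
    by (subst affine(1)) (use affine(2) assms(1) in \<open>simp add: integrable_density integrable_distr_eq\<close>)
qed

lemma sigma_finite_lebesgue: "sigma_finite_measure (lebesgue :: 'a::euclidean_space measure)"
  unfolding sigma_finite_measure_def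
proof (intro exI[of _ "range (\<lambda>n::nat. cball (0::'a) (real n))"] conjI)
  show "\<Union> (range (\<lambda>n::nat. cball (0::'a) (real n))) = space lebesgue"
    by (auto simp: real_arch_simple)
  show "\<forall>a\<in>range (\<lambda>n::nat. cball (0::'a) (real n)). emeasure lebesgue a \<noteq> \<infinity>"
    using emeasure_lborel_cball_finite[of "0::'a"] by (auto simp: emeasure_completion) (metis less_irrefl)
qed auto

interpretation lebesgue: sigma_finite_measure "lebesgue :: 'a::euclidean_space measure"
  by (rule sigma_finite_lebesgue)

interpretation lebesgue_pair: pair_sigma_finite "lebesgue :: 'a::euclidean_space measure" lebesgue ..

section \<open>The Ornstein-Uhlenbeck operator\<close>

(* Density of rho x + sqrt (1 - rho^2) Y for a standard Gaussian Y. *)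
definition mehler_kernel :: "real \<Rightarrow> 'a::euclidean_space \<Rightarrow> 'a \<Rightarrow> real" where
  "mehler_kernel \<rho> x z =
     gauss_dens ((1 / sqrt (1 - \<rho>\<^sup>2)) *\<^sub>R (z - \<rho> *\<^sub>R x)) / sqrt (1 - \<rho>\<^sup>2) ^ DIM('a)"

lemma measurable_mehler_kernel [measurable]:
  "(\<lambda>p. mehler_kernel \<rho> (fst p) (snd p)) \<in> borel_measurable (lebesgue \<Otimes>\<^sub>M lebesgue)"
  "mehler_kernel \<rho> x \<in> borel_measurable lebesgue"
  unfolding mehler_kernel_def by measurable

definition ou_pairing :: "real \<Rightarrow> ('a::euclidean_space \<Rightarrow> real) \<Rightarrow> ('a \<Rightarrow> real) \<Rightarrow> real" where
  "ou_pairing \<rho> u v = (\<integral>x. u x * ou_op \<rho> v x * gauss_dens x \<partial>lebesgue)"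

lemma noise_stab_eq_sum_ou_pairing:
  "noise_stab \<rho> m \<Omega> = (\<Sum>i<m. ou_pairing \<rho> (indicator (\<Omega> i)) (indicator (\<Omega> i)))"
  by (simp add: noise_stab_def ou_pairing_def)

context
  fixes \<rho> :: real
  assumes abs_rho: "\<bar>\<rho>\<bar> < 1"
begin

lemma one_minus_rho_square_pos: "0 < 1 - \<rho>\<^sup>2"
  using abs_rho by (simp add: abs_square_less_1)

lemma sqrt_one_minus_rho_square_pos: "0 < sqrt (1 - \<rho>\<^sup>2)"
  using one_minus_rho_square_pos by simp

lemma mehler_kernel_nonneg: "0 \<le> mehler_kernel \<rho> x z"
  using sqrt_one_minus_rho_square_pos by (simp add: mehler_kernel_def)

lemma mehler_kernel_eq:
  "mehler_kernel \<rho> x z =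
     gauss_dens (0::'a) / sqrt (1 - \<rho>\<^sup>2) ^ DIM('a) * exp (- (norm (z - \<rho> *\<^sub>R x))\<^sup>2 / (2 * (1 - \<rho>\<^sup>2)))"
  for x z :: "'a::euclidean_space"
proof -
  have "(norm ((1 / sqrt (1 - \<rho>\<^sup>2)) *\<^sub>R (z - \<rho> *\<^sub>R x)))\<^sup>2 = (norm (z - \<rho> *\<^sub>R x))\<^sup>2 / (1 - \<rho>\<^sup>2)"
    using one_minus_rho_square_pos by (simp add: power_mult_distrib power_divide)
  then show ?thesis
    unfolding mehler_kernel_def gauss_dens_eq[of "(1 / sqrt (1 - \<rho>\<^sup>2)) *\<^sub>R (z - \<rho> *\<^sub>R x)"] by simp
qed

lemma mehler_kernel_shift:
  "mehler_kernel \<rho> x (\<rho> *\<^sub>R x + sqrt (1 - \<rho>\<^sup>2) *\<^sub>R y) = gauss_dens y / sqrt (1 - \<rho>\<^sup>2) ^ DIM('a)"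
  for x y :: "'a::euclidean_space"
  using sqrt_one_minus_rho_square_pos unfolding mehler_kernel_def by simp

lemma ou_op_eq_mehler_kernel:
  fixes w :: "'a::euclidean_space \<Rightarrow> real"
  assumes [measurable]: "w \<in> borel_measurable lebesgue"
  shows "ou_op \<rho> w x = (\<integral>z. w z * mehler_kernel \<rho> x z \<partial>lebesgue)"
proof -
  let ?s = "sqrt (1 - \<rho>\<^sup>2)"
  have s: "0 < ?s" by (rule sqrt_one_minus_rho_square_pos)
  have "(\<integral>z. w z * mehler_kernel \<rho> x z \<partial>lebesgue) =
      ?s ^ DIM('a) * (\<integral>y. w (\<rho> *\<^sub>R x + ?s *\<^sub>R y) * mehler_kernel \<rho> x (\<rho> *\<^sub>R x + ?s *\<^sub>R y) \<partial>lebesgue)"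
    using integral_lebesgue_affine[of ?s "\<lambda>z. w z * mehler_kernel \<rho> x z" "\<rho> *\<^sub>R x"] s by simp
  also have "\<dots> = ou_op \<rho> w x"
    unfolding mehler_kernel_shift ou_op_def using s by simp
  finally show ?thesis ..
qed

lemma
  fixes x :: "'a::euclidean_space"
  shows integrable_mehler_kernel: "integrable lebesgue (mehler_kernel \<rho> x)"
    and integral_mehler_kernel: "(\<integral>z. mehler_kernel \<rho> x z \<partial>lebesgue) = 1"
proof -
  let ?s = "sqrt (1 - \<rho>\<^sup>2)"
  have s: "0 < ?s" by (rule sqrt_one_minus_rho_square_pos)
  have "integrable lebesgue (\<lambda>y. mehler_kernel \<rho> x (\<rho> *\<^sub>R x + ?s *\<^sub>R y))"
    unfolding mehler_kernel_shift by (intro integrable_divide_zero integrable_gauss_dens)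
  then show "integrable lebesgue (mehler_kernel \<rho> x)"
    using integrable_lebesgue_affine_iff[of ?s "mehler_kernel \<rho> x" "\<rho> *\<^sub>R x"] s by simp
  show "(\<integral>z. mehler_kernel \<rho> x z \<partial>lebesgue) = 1"
    using ou_op_eq_mehler_kernel[of "\<lambda>_. 1" x] integral_gauss_dens[where 'a='a]
    by (simp add: ou_op_def)
qed

lemma gauss_dens_mult_mehler_kernel_commute:
  "gauss_dens x * mehler_kernel \<rho> x z = gauss_dens z * mehler_kernel \<rho> z x"
  for x z :: "'a::euclidean_space"
proof -
  have expand: "(norm (v - \<rho> *\<^sub>R u))\<^sup>2 = (norm v)\<^sup>2 - 2 * \<rho> * (u \<bullet> v) + \<rho>\<^sup>2 * (norm u)\<^sup>2" for u v :: 'a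
    unfolding power2_norm_eq_inner
    by (simp add: inner_diff_left inner_diff_right inner_commute algebra_simps power2_eq_square)
  have "- (norm x)\<^sup>2 / 2 + - (norm (z - \<rho> *\<^sub>R x))\<^sup>2 / (2 * (1 - \<rho>\<^sup>2)) =
      - (norm z)\<^sup>2 / 2 + - (norm (x - \<rho> *\<^sub>R z))\<^sup>2 / (2 * (1 - \<rho>\<^sup>2))"
    using one_minus_rho_square_pos unfolding expand by (simp add: field_simps inner_commute)
  then show ?thesis
    unfolding gauss_dens_eq[of x] gauss_dens_eq[of z] mehler_kernel_eq mult.assoc
    by (simp add: exp_add[symmetric] ac_simps)
qed

lemma
  fixes w :: "'a::euclidean_space \<Rightarrow> real"
  assumes [measurable]: "w \<in> borel_measurable lebesgue" and w_bound: "\<And>z. \<bar>w z\<bar> \<le> 1"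
  shows integrable_mult_mehler_kernel: "integrable lebesgue (\<lambda>z. w z * mehler_kernel \<rho> x z)"
    and abs_ou_op_le_1: "\<bar>ou_op \<rho> w x\<bar> \<le> 1"
proof -
  have bound: "\<bar>w z * mehler_kernel \<rho> x z\<bar> \<le> mehler_kernel \<rho> x z" for z
    using w_bound[of z] mehler_kernel_nonneg[of x z]
    by (simp add: abs_mult mult_left_le_one_le)
  show integrable: "integrable lebesgue (\<lambda>z. w z * mehler_kernel \<rho> x z)"
    by (rule Bochner_Integration.integrable_bound[OF integrable_mehler_kernel[of x]])
      (use bound in \<open>auto simp: abs_of_nonneg[OF mehler_kernel_nonneg]\<close>)
  have "\<bar>ou_op \<rho> w x\<bar> \<le> (\<integral>z. mehler_kernel \<rho> x z \<partial>lebesgue)"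
    unfolding ou_op_eq_mehler_kernel[OF assms(1)]
    by (rule integral_abs_bound_integral[OF integrable integrable_mehler_kernel bound])
  then show "\<bar>ou_op \<rho> w x\<bar> \<le> 1"
    using integral_mehler_kernel[of x] by simp
qed

lemma ou_op_lincomb:
  fixes u v :: "'a::euclidean_space \<Rightarrow> real"
  assumes [measurable]: "u \<in> borel_measurable lebesgue" "v \<in> borel_measurable lebesgue"
    and "\<And>z. \<bar>u z\<bar> \<le> 1" "\<And>z. \<bar>v z\<bar> \<le> 1"
  shows "ou_op \<rho> (\<lambda>z. a * u z + b * v z) x = a * ou_op \<rho> u x + b * ou_op \<rho> v x"
proof -
  have "integrable lebesgue (\<lambda>z. u z * mehler_kernel \<rho> x z)"
    and "integrable lebesgue (\<lambda>z. v z * mehler_kernel \<rho> x z)"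
    using integrable_mult_mehler_kernel assms by blast+
  then show ?thesis
    by (simp add: ou_op_eq_mehler_kernel distrib_right mult.assoc)
qed

lemma mehler_kernel_le_scaled_gauss_dens:
  fixes x z :: "'a::euclidean_space"
  assumes "norm x \<le> R"
  shows "mehler_kernel \<rho> x z \<le> exp (R\<^sup>2 / (2 * (1 - \<rho>\<^sup>2))) / sqrt (1 - \<rho>\<^sup>2) ^ DIM('a) *
           gauss_dens ((1 / sqrt (2 * (1 - \<rho>\<^sup>2))) *\<^sub>R z)"
proof -
  have p: "0 < 1 - \<rho>\<^sup>2" by (rule one_minus_rho_square_pos)
  have "norm (\<rho> *\<^sub>R x) \<le> R"
    using assms abs_rho by (simp add: mult_le_one order_trans[OF mult_left_le_one_le])
  moreover have "norm z \<le> norm (z - \<rho> *\<^sub>R x) + norm (\<rho> *\<^sub>R x)"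
    by (metis norm_triangle_sub add.commute)
  ultimately have "(norm z)\<^sup>2 \<le> (norm (z - \<rho> *\<^sub>R x) + R)\<^sup>2"
    by (simp add: power_mono)
  also have "\<dots> \<le> 2 * (norm (z - \<rho> *\<^sub>R x))\<^sup>2 + 2 * R\<^sup>2"
    using sum_squares_ge_zero[of "norm (z - \<rho> *\<^sub>R x) - R" 0]
    by (simp add: power2_eq_square algebra_simps)
  finally have square: "(norm z)\<^sup>2 \<le> 2 * (norm (z - \<rho> *\<^sub>R x))\<^sup>2 + 2 * R\<^sup>2" .
  have "- N / (2 * q) \<le> S / (2 * q) + - Z / (4 * q)"
    if "0 < q" "Z \<le> 2 * N + 2 * S" for N S Z q :: real
    using that by (simp add: field_simps)
  from this[OF p square] have exponent:
    "- (norm (z - \<rho> *\<^sub>R x))\<^sup>2 / (2 * (1 - \<rho>\<^sup>2)) \<le>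
      R\<^sup>2 / (2 * (1 - \<rho>\<^sup>2)) + - (norm z)\<^sup>2 / (4 * (1 - \<rho>\<^sup>2))" .
  have scaled: "- (norm ((1 / sqrt (2 * (1 - \<rho>\<^sup>2))) *\<^sub>R z))\<^sup>2 / 2 = - (norm z)\<^sup>2 / (4 * (1 - \<rho>\<^sup>2))"
    using p by (simp add: power_mult_distrib power_divide)
  have "mehler_kernel \<rho> x z =
      gauss_dens (0::'a) / sqrt (1 - \<rho>\<^sup>2) ^ DIM('a) * exp (- (norm (z - \<rho> *\<^sub>R x))\<^sup>2 / (2 * (1 - \<rho>\<^sup>2)))"
    by (rule mehler_kernel_eq)
  also have "\<dots> \<le> gauss_dens (0::'a) / sqrt (1 - \<rho>\<^sup>2) ^ DIM('a) *
      exp (R\<^sup>2 / (2 * (1 - \<rho>\<^sup>2)) + - (norm z)\<^sup>2 / (4 * (1 - \<rho>\<^sup>2)))"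
    using exponent sqrt_one_minus_rho_square_pos by (intro mult_left_mono) auto
  also have "\<dots> = exp (R\<^sup>2 / (2 * (1 - \<rho>\<^sup>2))) / sqrt (1 - \<rho>\<^sup>2) ^ DIM('a) *
      gauss_dens ((1 / sqrt (2 * (1 - \<rho>\<^sup>2))) *\<^sub>R z)"
    unfolding gauss_dens_eq[of "(1 / sqrt (2 * (1 - \<rho>\<^sup>2))) *\<^sub>R z"] scaled exp_add by simp
  finally show ?thesis .
qed

lemma continuous_ou_op:
  fixes w :: "'a::euclidean_space \<Rightarrow> real"
  assumes [measurable]: "w \<in> borel_measurable lebesgue" and w_bound: "\<And>z. \<bar>w z\<bar> \<le> 1"
  shows "continuous (at a) (ou_op \<rho> w)"
proof (rule continuous_at_sequentiallyI)
  fix X assume X: "X \<longlonglongrightarrow> a"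
  then obtain R where R: "\<And>n. norm (X n) \<le> R"
    using convergent_imp_Bseq convergentI by (metis BseqE less_eq_real_def)
  let ?c = "1 / sqrt (2 * (1 - \<rho>\<^sup>2))"
  let ?D = "\<lambda>z::'a. exp (R\<^sup>2 / (2 * (1 - \<rho>\<^sup>2))) / sqrt (1 - \<rho>\<^sup>2) ^ DIM('a) * gauss_dens (?c *\<^sub>R z)"
  have "?c \<noteq> 0"
    using one_minus_rho_square_pos by simp
  then have "integrable lebesgue (\<lambda>z::'a. gauss_dens (0 + ?c *\<^sub>R z))"
    using integrable_lebesgue_affine_iff[of ?c gauss_dens 0] integrable_gauss_dens by blast
  then have "integrable lebesgue ?D"
    by (intro integrable_mult_right) simp
  then have "(\<lambda>n. \<integral>z. w z * mehler_kernel \<rho> (X n) z \<partial>lebesgue) \<longlonglongrightarrow> (\<integral>z. w z * mehler_kernel \<rho> a z \<partial>lebesgue)"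
  proof (rule integral_dominated_convergence[rotated 2])
    show "AE z in lebesgue. (\<lambda>n. w z * mehler_kernel \<rho> (X n) z) \<longlonglongrightarrow> w z * mehler_kernel \<rho> a z"
      unfolding mehler_kernel_eq
      by (intro AE_I2 tendsto_intros X) (use one_minus_rho_square_pos in auto)
    show "AE z in lebesgue. norm (w z * mehler_kernel \<rho> (X n) z) \<le> ?D z" for n
    proof (intro AE_I2)
      fix z
      have "norm (w z * mehler_kernel \<rho> (X n) z) \<le> mehler_kernel \<rho> (X n) z"
        using w_bound[of z] mehler_kernel_nonneg[of "X n" z]
        by (simp add: abs_mult mult_left_le_one_le)
      also have "\<dots> \<le> ?D z"
        by (rule mehler_kernel_le_scaled_gauss_dens[OF R])
      finally show "norm (w z * mehler_kernel \<rho> (X n) z) \<le> ?D z" .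
    qed
  qed simp_all
  then show "(\<lambda>n. ou_op \<rho> w (X n)) \<longlonglongrightarrow> ou_op \<rho> w a"
    unfolding ou_op_eq_mehler_kernel[OF assms(1)] .
qed

lemma lebesgue_measurable_ou_op [measurable]:
  fixes w :: "'a::euclidean_space \<Rightarrow> real"
  assumes "w \<in> borel_measurable lebesgue" and "\<And>z. \<bar>w z\<bar> \<le> 1"
  shows "ou_op \<rho> w \<in> borel_measurable lebesgue"
proof (rule measurable_completion)
  have "continuous_on UNIV (ou_op \<rho> w)"
    by (intro continuous_at_imp_continuous_on ballI continuous_ou_op assms)
  then show "ou_op \<rho> w \<in> borel_measurable lborel"
    by (simp add: borel_measurable_continuous_onI)
qed

lemma abs_ou_op_le_if_vanishing_outside_ball:
  fixes g :: "'a::euclidean_space \<Rightarrow> real"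
  assumes [measurable]: "g \<in> borel_measurable lebesgue" and g_bound: "\<And>z. \<bar>g z\<bar> \<le> 1"
    and vanish: "\<And>z. R < norm z \<Longrightarrow> g z = 0"
  shows "\<bar>ou_op \<rho> g x\<bar> \<le>
    exp (R\<^sup>2 / 2) / sqrt (1 - \<rho>\<^sup>2) ^ DIM('a) * (\<integral>z. \<bar>g z\<bar> * gauss_dens z \<partial>lebesgue)"
proof -
  let ?C = "exp (R\<^sup>2 / 2) / sqrt (1 - \<rho>\<^sup>2) ^ DIM('a)"
  have s: "0 < sqrt (1 - \<rho>\<^sup>2)" by (rule sqrt_one_minus_rho_square_pos)
  have kernel_bound: "mehler_kernel \<rho> x z \<le> ?C * gauss_dens z" if "norm z \<le> R" for z
  proof -
    have "(norm z)\<^sup>2 \<le> R\<^sup>2"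
      using that norm_ge_zero[of z] by (intro power_mono) auto
    then have "1 \<le> exp (R\<^sup>2 / 2) * exp (- (norm z)\<^sup>2 / 2)"
      by (simp add: exp_add[symmetric])
    then have gauss_0: "gauss_dens (0::'a) \<le> exp (R\<^sup>2 / 2) * gauss_dens z"
      using mult_left_mono[of 1 _ "gauss_dens (0::'a)"] by (simp add: gauss_dens_eq[of z] mult.assoc mult.left_commute)
    have "mehler_kernel \<rho> x z \<le> gauss_dens (0::'a) / sqrt (1 - \<rho>\<^sup>2) ^ DIM('a)"
      unfolding mehler_kernel_eq using s one_minus_rho_square_pos
      by (intro mult_right_le_one_le) auto
    also have "\<dots> \<le> ?C * gauss_dens z"
      using gauss_0 s by (simp add: divide_right_mono)
    finally show ?thesis .
  qed
  have pointwise: "\<bar>g z * mehler_kernel \<rho> x z\<bar> \<le> ?C * (\<bar>g z\<bar> * gauss_dens z)" for z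
  proof (cases "R < norm z")
    case False
    have "\<bar>g z * mehler_kernel \<rho> x z\<bar> = \<bar>g z\<bar> * mehler_kernel \<rho> x z"
      by (simp add: abs_mult abs_of_nonneg[OF mehler_kernel_nonneg])
    also have "\<dots> \<le> \<bar>g z\<bar> * (?C * gauss_dens z)"
      using False kernel_bound[of z] by (intro mult_left_mono) auto
    finally show ?thesis by (simp only: ac_simps)
  qed (simp add: vanish)
  have "integrable lebesgue (\<lambda>z. \<bar>g z\<bar> * gauss_dens z)"
    by (rule Bochner_Integration.integrable_bound[OF integrable_gauss_dens])
      (use g_bound in \<open>auto simp: abs_mult mult_left_le_one_le\<close>)
  then have "\<bar>ou_op \<rho> g x\<bar> \<le> (\<integral>z. ?C * (\<bar>g z\<bar> * gauss_dens z) \<partial>lebesgue)"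
    unfolding ou_op_eq_mehler_kernel[OF assms(1)]
    by (intro integral_abs_bound_integral pointwise integrable_mult_mehler_kernel assms) simp
  then show ?thesis by simp
qed

lemma integrable_ou_pairing:
  fixes u v :: "'a::euclidean_space \<Rightarrow> real"
  assumes [measurable]: "u \<in> borel_measurable lebesgue" "v \<in> borel_measurable lebesgue"
    and u_bound: "\<And>z. \<bar>u z\<bar> \<le> 1" and v_bound: "\<And>z. \<bar>v z\<bar> \<le> 1"
  shows "integrable lebesgue (\<lambda>x. u x * ou_op \<rho> v x * gauss_dens x)"
proof (rule Bochner_Integration.integrable_bound[OF integrable_gauss_dens])
  have [measurable]: "ou_op \<rho> v \<in> borel_measurable lebesgue"
    by (rule lebesgue_measurable_ou_op[OF assms(2) v_bound])
  show "(\<lambda>x. u x * ou_op \<rho> v x * gauss_dens x) \<in> borel_measurable lebesgue"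
    by measurable
  have "\<bar>u x * ou_op \<rho> v x\<bar> \<le> 1" for x
    using u_bound[of x] abs_ou_op_le_1[OF assms(2) v_bound, of x]
    by (simp add: abs_mult mult_le_one)
  then show "AE x in lebesgue. norm (u x * ou_op \<rho> v x * gauss_dens x) \<le> norm (gauss_dens x)"
    by (intro AE_I2) (simp add: abs_mult mult_left_le_one_le)
qed

lemma ou_pairing_eq_double_integral:
  fixes u v :: "'a::euclidean_space \<Rightarrow> real"
  assumes "v \<in> borel_measurable lebesgue"
  shows "ou_pairing \<rho> u v =
    (\<integral>x. (\<integral>z. u x * v z * (gauss_dens x * mehler_kernel \<rho> x z) \<partial>lebesgue) \<partial>lebesgue)"
  unfolding ou_pairing_def ou_op_eq_mehler_kernel[OF assms]
  by (intro Bochner_Integration.integral_cong)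
    (simp_all flip: integral_mult_left_zero integral_mult_right_zero add: ac_simps)

lemma integrable_ou_pairing_kernel:
  fixes u v :: "'a::euclidean_space \<Rightarrow> real"
  assumes [measurable]: "u \<in> borel_measurable lebesgue" "v \<in> borel_measurable lebesgue"
    and u_bound: "\<And>z. \<bar>u z\<bar> \<le> 1" and v_bound: "\<And>z. \<bar>v z\<bar> \<le> 1"
  shows "integrable (lebesgue \<Otimes>\<^sub>M lebesgue)
    (\<lambda>(x, z). u x * v z * (gauss_dens x * mehler_kernel \<rho> x z))"
proof (rule lebesgue_pair.Fubini_integrable)
  let ?K = "\<lambda>(x::'a) z. gauss_dens x * mehler_kernel \<rho> x z"
  have K_nonneg: "0 \<le> ?K x z" for x z
    by (intro mult_nonneg_nonneg gauss_dens_nonneg mehler_kernel_nonneg)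
  have bound: "\<bar>u x * v z * ?K x z\<bar> \<le> ?K x z" for x z
  proof -
    have "\<bar>u x * v z\<bar> \<le> 1"
      using u_bound[of x] v_bound[of z] by (simp add: abs_mult mult_le_one)
    then have "\<bar>u x * v z\<bar> * ?K x z \<le> ?K x z"
      using K_nonneg[of x z] by (simp add: mult_left_le_one_le)
    then show ?thesis
      using K_nonneg[of x z] by (simp add: abs_mult abs_of_nonneg[OF mehler_kernel_nonneg])
  qed
  have K_integrable: "integrable lebesgue (?K x)" for x
    using integrable_mehler_kernel[of x] by simp
  have inner: "integrable lebesgue (\<lambda>z. u x * v z * ?K x z)" for x
    by (rule Bochner_Integration.integrable_bound[OF K_integrable])
      (use bound in \<open>auto simp: abs_of_nonneg[OF K_nonneg]\<close>)
  then show "AE x in lebesgue. integrable lebesgue (\<lambda>z. (\<lambda>(x, z). u x * v z * ?K x z) (x, z))"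
    by simp
  show "(\<lambda>(x, z). u x * v z * ?K x z) \<in> borel_measurable (lebesgue \<Otimes>\<^sub>M lebesgue)"
    by measurable
  have "(\<integral>z. \<bar>u x * v z * ?K x z\<bar> \<partial>lebesgue) \<le> gauss_dens x" for x
  proof -
    have "(\<integral>z. \<bar>u x * v z * ?K x z\<bar> \<partial>lebesgue) \<le> (\<integral>z. ?K x z \<partial>lebesgue)"
      by (intro integral_mono K_integrable bound) (use inner in auto)
    also have "\<dots> = gauss_dens x"
      using integral_mehler_kernel[of x] by simp
    finally show ?thesis .
  qed
  then show "integrable lebesgue (\<lambda>x. \<integral>z. norm ((\<lambda>(x, z). u x * v z * ?K x z) (x, z)) \<partial>lebesgue)"
    by (intro Bochner_Integration.integrable_bound[OF integrable_gauss_dens] AE_I2)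
      (auto simp: integral_nonneg_AE)
qed

lemma ou_pairing_commute:
  fixes u v :: "'a::euclidean_space \<Rightarrow> real"
  assumes [measurable]: "u \<in> borel_measurable lebesgue" "v \<in> borel_measurable lebesgue"
    and "\<And>z. \<bar>u z\<bar> \<le> 1" "\<And>z. \<bar>v z\<bar> \<le> 1"
  shows "ou_pairing \<rho> u v = ou_pairing \<rho> v u"
proof -
  have "ou_pairing \<rho> u v =
      (\<integral>x. (\<integral>z. u x * v z * (gauss_dens x * mehler_kernel \<rho> x z) \<partial>lebesgue) \<partial>lebesgue)"
    by (rule ou_pairing_eq_double_integral) simp
  also have "\<dots> = (\<integral>z. (\<integral>x. u x * v z * (gauss_dens x * mehler_kernel \<rho> x z) \<partial>lebesgue) \<partial>lebesgue)"
    using lebesgue_pair.Fubini_integral[of "\<lambda>x z. u x * v z * (gauss_dens x * mehler_kernel \<rho> x z)"]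
      integrable_ou_pairing_kernel[OF assms] by simp
  also have "\<dots> = (\<integral>z. (\<integral>x. v z * u x * (gauss_dens z * mehler_kernel \<rho> z x) \<partial>lebesgue) \<partial>lebesgue)"
    by (simp add: gauss_dens_mult_mehler_kernel_commute ac_simps)
  also have "\<dots> = ou_pairing \<rho> v u"
    by (rule ou_pairing_eq_double_integral[symmetric]) simp
  finally show ?thesis .
qed

lemma ou_pairing_diff_right:
  fixes g u v :: "'a::euclidean_space \<Rightarrow> real"
  assumes [measurable]: "g \<in> borel_measurable lebesgue" "u \<in> borel_measurable lebesgue"
      "v \<in> borel_measurable lebesgue"
    and "\<And>z. \<bar>g z\<bar> \<le> 1" "\<And>z. \<bar>u z\<bar> \<le> 1" "\<And>z. \<bar>v z\<bar> \<le> 1"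
  shows "ou_pairing \<rho> g (\<lambda>z. u z - v z) = ou_pairing \<rho> g u - ou_pairing \<rho> g v"
proof -
  have "ou_op \<rho> (\<lambda>z. u z - v z) x = ou_op \<rho> u x - ou_op \<rho> v x" for x
    using ou_op_lincomb[OF assms(2,3,5,6), of 1 "-1" x] by simp
  moreover have "integrable lebesgue (\<lambda>x. g x * ou_op \<rho> u x * gauss_dens x)"
    and "integrable lebesgue (\<lambda>x. g x * ou_op \<rho> v x * gauss_dens x)"
    using integrable_ou_pairing assms by blast+
  ultimately show ?thesis
    unfolding ou_pairing_def by (simp add: right_diff_distrib left_diff_distrib)
qed

lemma ou_pairing_expand:
  fixes u g :: "'a::euclidean_space \<Rightarrow> real"
  assumes [measurable]: "u \<in> borel_measurable lebesgue" "g \<in> borel_measurable lebesgue"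
    and "\<And>z. \<bar>u z\<bar> \<le> 1" "\<And>z. \<bar>g z\<bar> \<le> 1"
  shows "ou_pairing \<rho> (\<lambda>z. u z + c * g z) (\<lambda>z. u z + c * g z) =
    ou_pairing \<rho> u u + 2 * c * ou_pairing \<rho> g u + c\<^sup>2 * ou_pairing \<rho> g g"
proof -
  have "ou_op \<rho> (\<lambda>z. u z + c * g z) x = ou_op \<rho> u x + c * ou_op \<rho> g x" for x
    using ou_op_lincomb[OF assms, of 1 c x] by simp
  then have "ou_pairing \<rho> (\<lambda>z. u z + c * g z) (\<lambda>z. u z + c * g z) =
      (\<integral>x. (u x * ou_op \<rho> u x * gauss_dens x + c * (u x * ou_op \<rho> g x * gauss_dens x)) +
        (c * (g x * ou_op \<rho> u x * gauss_dens x) + c\<^sup>2 * (g x * ou_op \<rho> g x * gauss_dens x)) \<partial>lebesgue)"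
    unfolding ou_pairing_def by (simp add: algebra_simps power2_eq_square)
  also have "\<dots> = ou_pairing \<rho> u u + c * ou_pairing \<rho> u g + (c * ou_pairing \<rho> g u + c\<^sup>2 * ou_pairing \<rho> g g)"
    using integrable_ou_pairing[OF assms(1,1,3,3)] integrable_ou_pairing[OF assms(1,2,3,4)]
      integrable_ou_pairing[OF assms(2,1,4,3)] integrable_ou_pairing[OF assms(2,2,4,4)]
    unfolding ou_pairing_def by simp
  also have "\<dots> = ou_pairing \<rho> u u + 2 * c * ou_pairing \<rho> g u + c\<^sup>2 * ou_pairing \<rho> g g"
    using ou_pairing_commute[OF assms] by simp
  finally show ?thesis .
qed

lemma ou_pairing_indicator_diff_ge:
  fixes h :: "'a::euclidean_space \<Rightarrow> real"
  assumes [measurable]: "A \<in> sets lebesgue" "B \<in> sets lebesgue" "h \<in> borel_measurable lebesgue"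
    and h_bound: "\<And>z. \<bar>h z\<bar> \<le> 1"
    and on_A: "\<And>y. y \<in> A \<Longrightarrow> \<alpha> \<le> ou_op \<rho> h y" and on_B: "\<And>y. y \<in> B \<Longrightarrow> ou_op \<rho> h y \<le> \<beta>"
  shows "\<alpha> * gauss_measure A - \<beta> * gauss_measure B \<le> ou_pairing \<rho> (\<lambda>y. indicator A y - indicator B y) h"
proof -
  have indicator_bound: "\<bar>indicator S y :: real\<bar> \<le> 1" for S and y :: 'a
    by (simp add: indicator_def)
  have int_A: "integrable lebesgue (\<lambda>y. indicator A y * ou_op \<rho> h y * gauss_dens y)"
    and int_B: "integrable lebesgue (\<lambda>y. indicator B y * ou_op \<rho> h y * gauss_dens y)"
    by (intro integrable_ou_pairing indicator_bound h_bound; simp)+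
  have "\<alpha> * gauss_measure A = (\<integral>y. \<alpha> * (indicator A y * gauss_dens y) \<partial>lebesgue)"
    by (simp add: gauss_measure_def)
  also have "\<dots> \<le> (\<integral>y. indicator A y * ou_op \<rho> h y * gauss_dens y \<partial>lebesgue)"
    using integrable_indicator_gauss_dens[of A] on_A
    by (intro integral_mono int_A) (auto simp: indicator_def intro!: mult_right_mono)
  finally have "\<alpha> * gauss_measure A \<le> (\<integral>y. indicator A y * ou_op \<rho> h y * gauss_dens y \<partial>lebesgue)" .
  moreover have "(\<integral>y. indicator B y * ou_op \<rho> h y * gauss_dens y \<partial>lebesgue) \<le>
      (\<integral>y. \<beta> * (indicator B y * gauss_dens y) \<partial>lebesgue)"
    using integrable_indicator_gauss_dens[of B] on_B
    by (intro integral_mono int_B) (auto simp: indicator_def intro!: mult_right_mono)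
  moreover have "(\<integral>y. \<beta> * (indicator B y * gauss_dens y) \<partial>lebesgue) = \<beta> * gauss_measure B"
    by (simp add: gauss_measure_def)
  moreover have "ou_pairing \<rho> (\<lambda>y. indicator A y - indicator B y) h =
      (\<integral>y. indicator A y * ou_op \<rho> h y * gauss_dens y \<partial>lebesgue) -
      (\<integral>y. indicator B y * ou_op \<rho> h y * gauss_dens y \<partial>lebesgue)"
    unfolding ou_pairing_def using int_A int_B by (simp add: left_diff_distrib)
  ultimately show ?thesis by linarith
qed

lemma abs_ou_pairing_self_le:
  fixes g :: "'a::euclidean_space \<Rightarrow> real"
  assumes [measurable]: "g \<in> borel_measurable lebesgue" and g_bound: "\<And>z. \<bar>g z\<bar> \<le> 1"
    and vanish: "\<And>z. R < norm z \<Longrightarrow> g z = 0"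
  shows "\<bar>ou_pairing \<rho> g g\<bar> \<le>
    exp (R\<^sup>2 / 2) / sqrt (1 - \<rho>\<^sup>2) ^ DIM('a) * (\<integral>z. \<bar>g z\<bar> * gauss_dens z \<partial>lebesgue)\<^sup>2"
proof -
  let ?M = "exp (R\<^sup>2 / 2) / sqrt (1 - \<rho>\<^sup>2) ^ DIM('a) * (\<integral>z. \<bar>g z\<bar> * gauss_dens z \<partial>lebesgue)"
  have "integrable lebesgue (\<lambda>z. \<bar>g z\<bar> * gauss_dens z)"
    by (rule Bochner_Integration.integrable_bound[OF integrable_gauss_dens])
      (use g_bound in \<open>auto simp: abs_mult mult_left_le_one_le\<close>)
  moreover have "\<bar>g x * ou_op \<rho> g x * gauss_dens x\<bar> \<le> ?M * (\<bar>g x\<bar> * gauss_dens x)" for x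
  proof -
    have "\<bar>ou_op \<rho> g x\<bar> \<le> ?M"
      by (rule abs_ou_op_le_if_vanishing_outside_ball[OF assms(1) g_bound vanish])
    then have "\<bar>g x\<bar> * \<bar>ou_op \<rho> g x\<bar> * gauss_dens x \<le> \<bar>g x\<bar> * ?M * gauss_dens x"
      by (intro mult_right_mono mult_left_mono) auto
    then show ?thesis
      by (simp add: abs_mult ac_simps)
  qed
  ultimately have "\<bar>ou_pairing \<rho> g g\<bar> \<le> (\<integral>x. ?M * (\<bar>g x\<bar> * gauss_dens x) \<partial>lebesgue)"
    unfolding ou_pairing_def
    by (intro integral_abs_bound_integral integrable_ou_pairing assms) auto
  then show ?thesis
    by (simp add: power2_eq_square)
qed

lemma abs_ou_pairing_indicator_diff_le:
  fixes A B :: "'a::euclidean_space set"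
  assumes [measurable]: "A \<in> sets lebesgue" "B \<in> sets lebesgue"
    and "A \<inter> B = {}" "A \<subseteq> ball x r" "B \<subseteq> ball y r"
  shows "\<bar>ou_pairing \<rho> (\<lambda>z. indicator A z - indicator B z) (\<lambda>z. indicator A z - indicator B z)\<bar> \<le>
    exp ((norm x + norm y + r)\<^sup>2 / 2) / sqrt (1 - \<rho>\<^sup>2) ^ DIM('a) * (gauss_measure A + gauss_measure B)\<^sup>2"
proof -
  define g :: "'a \<Rightarrow> real" where "g = (\<lambda>z. indicator A z - indicator B z)"
  have g_measurable: "g \<in> borel_measurable lebesgue" and g_bound: "\<And>z. \<bar>g z\<bar> \<le> 1"
    by (auto simp: g_def indicator_def)
  have g_vanish: "g z = 0" if "norm x + norm y + r < norm z" for z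
  proof -
    have "z \<notin> ball x r" "z \<notin> ball y r"
      using that norm_triangle_ineq2[of z x] norm_triangle_ineq2[of z y]
      by (auto simp: dist_norm norm_minus_commute) (smt (verit) norm_ge_zero)+
    then have "z \<notin> A" "z \<notin> B"
      using assms(4,5) by auto
    then show ?thesis
      by (simp add: g_def)
  qed
  have "(\<integral>z. \<bar>g z\<bar> * gauss_dens z \<partial>lebesgue) = gauss_measure A + gauss_measure B"
    unfolding g_def using assms(3) by (rule integral_abs_indicator_diff_gauss_dens[OF assms(1,2)])
  then show ?thesis
    using abs_ou_pairing_self_le[OF g_measurable g_bound g_vanish] by (simp add: g_def)
qed

end

section \<open>Smooth bump fields and reduced boundary points\<close>

lemma has_real_derivative_max_0_square: "((\<lambda>v. (max 0 v)\<^sup>2) has_real_derivative 2 * max 0 u) (at u)"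
proof -
  consider "0 < u" | "u < 0" | "u = 0" by linarith
  then show ?thesis
  proof cases
    case 1
    have "((\<lambda>v. v\<^sup>2) has_real_derivative 2 * max 0 u) (at u)"
      using 1 by (auto intro!: derivative_eq_intros)
    then show ?thesis
      by (rule has_field_derivative_transform_within_open[where S="{0<..}"]) (use 1 in auto)
  next
    case 2
    have "((\<lambda>v. 0) has_real_derivative 2 * max 0 u) (at u)"
      using 2 by (auto intro!: derivative_eq_intros)
    then show ?thesis
      by (rule has_field_derivative_transform_within_open[where S="{..<0}"]) (use 2 in auto)
  next
    case 3
    have "((\<lambda>v. ((max 0 v)\<^sup>2 - (max 0 0)\<^sup>2) / (v - 0)) \<longlongrightarrow> 0) (at (0::real))"
    proof (rule Lim_null_comparison)
      show "\<forall>\<^sub>F v in at 0. norm (((max 0 v)\<^sup>2 - (max 0 0)\<^sup>2) / (v - 0)) \<le> \<bar>v\<bar>"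
        by (intro always_eventually allI) (auto simp: power2_eq_square abs_mult max_def)
      show "((\<lambda>v. \<bar>v\<bar>) \<longlongrightarrow> 0) (at (0::real))"
        using tendsto_rabs[OF tendsto_ident_at[of "0::real" UNIV]] by simp
    qed
    then show ?thesis
      unfolding 3 has_field_derivative_iff by simp
  qed
qed

definition smooth_step :: "real \<Rightarrow> real" where
  "smooth_step u = 2 * (max 0 u)\<^sup>2 - 4 * (max 0 (u - 1/2))\<^sup>2 + 2 * (max 0 (u - 1))\<^sup>2"

definition smooth_step_deriv :: "real \<Rightarrow> real" where
  "smooth_step_deriv u = 4 * max 0 u - 8 * max 0 (u - 1/2) + 4 * max 0 (u - 1)"

lemma smooth_step_has_real_derivative: "(smooth_step has_real_derivative smooth_step_deriv u) (at u)"
proof -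
  have shifted: "((\<lambda>u. (max 0 (u - c))\<^sup>2) has_real_derivative 2 * max 0 (u - c)) (at u)" for c
    by (rule DERIV_chain2[OF has_real_derivative_max_0_square, of "\<lambda>u. u - c" 1 u, simplified])
      (auto intro!: derivative_eq_intros)
  have "((\<lambda>u. 2 * (max 0 (u - 0))\<^sup>2 - 4 * (max 0 (u - 1/2))\<^sup>2 + 2 * (max 0 (u - 1))\<^sup>2)
      has_real_derivative smooth_step_deriv u) (at u)"
    unfolding smooth_step_deriv_def
    by (rule DERIV_cong[OF DERIV_add[OF DERIV_diff[OF DERIV_cmult DERIV_cmult] DERIV_cmult]])
      (rule shifted | simp)+
  then show ?thesis
    by (simp add: smooth_step_def[abs_def])
qed

lemma continuous_on_smooth_step_deriv: "continuous_on UNIV smooth_step_deriv"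
  unfolding smooth_step_deriv_def[abs_def] by (intro continuous_intros)

lemma smooth_step_nonpos: "u \<le> 0 \<Longrightarrow> smooth_step u = 0"
  and smooth_step_deriv_nonpos: "u \<le> 0 \<Longrightarrow> smooth_step_deriv u = 0"
  and smooth_step_ge_1: "1 \<le> u \<Longrightarrow> smooth_step u = 1"
  by (simp_all add: smooth_step_def smooth_step_deriv_def max_def power2_eq_square algebra_simps)

lemma smooth_step_bounds: "0 \<le> smooth_step u \<and> smooth_step u \<le> 1"
proof -
  consider "u \<le> 0" | "0 \<le> u \<and> u \<le> 1/2" | "1/2 \<le> u \<and> u \<le> 1" | "1 \<le> u" by linarith
  then show ?thesis
  proof cases
    case 2
    then have "smooth_step u = 2 * u\<^sup>2" by (simp add: smooth_step_def max_def)
    moreover have "u\<^sup>2 \<le> (1/2)\<^sup>2" using 2 by (intro power_mono) auto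
    ultimately show ?thesis by (simp add: power2_eq_square)
  next
    case 3
    then have "smooth_step u = 1 - 2 * (1 - u)\<^sup>2"
      by (simp add: smooth_step_def max_def power2_eq_square algebra_simps)
    moreover have "(1 - u)\<^sup>2 \<le> (1/2)\<^sup>2" using 3 by (intro power_mono) auto
    ultimately show ?thesis by (simp add: power2_eq_square)
  qed (simp_all add: smooth_step_nonpos smooth_step_ge_1)
qed

definition bump_field :: "'a::euclidean_space \<Rightarrow> real \<Rightarrow> real \<Rightarrow> 'a \<Rightarrow> 'a \<Rightarrow> 'a" where
  "bump_field x r k e y = smooth_step (k * (r\<^sup>2 - (y - x) \<bullet> (y - x))) *\<^sub>R e"

definition bump_field_deriv :: "'a::euclidean_space \<Rightarrow> real \<Rightarrow> real \<Rightarrow> 'a \<Rightarrow> 'a \<Rightarrow> 'a \<Rightarrow>\<^sub>L 'a" where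
  "bump_field_deriv x r k e y =
     (smooth_step_deriv (k * (r\<^sup>2 - (y - x) \<bullet> (y - x))) * k * -2) *\<^sub>R
       (blinfun_scaleR_left e o\<^sub>L blinfun_inner_left (y - x))"

lemma bump_field_has_derivative:
  "(bump_field x r k e has_derivative blinfun_apply (bump_field_deriv x r k e y)) (at y)"
proof -
  let ?a = "\<lambda>y. k * (r\<^sup>2 - (y - x) \<bullet> (y - x))"
  have "(?a has_derivative (\<lambda>v. k * (- ((y - x) \<bullet> v + v \<bullet> (y - x))))) (at y)"
    by (auto intro!: derivative_eq_intros)
  moreover have "(smooth_step has_derivative (\<lambda>t. smooth_step_deriv (?a y) * t)) (at (?a y))"
    using smooth_step_has_real_derivative[of "?a y"] by (simp add: has_field_derivative_def)
  ultimately have "((\<lambda>y. smooth_step (?a y)) has_derivative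
      (\<lambda>v. smooth_step_deriv (?a y) * (k * (- ((y - x) \<bullet> v + v \<bullet> (y - x)))))) (at y)"
    by (rule has_derivative_compose)
  then show ?thesis
    unfolding bump_field_def[abs_def]
    by (rule has_derivative_eq_rhs[OF has_derivative_scaleR_left])
      (auto simp: bump_field_deriv_def inner_commute algebra_simps fun_eq_iff blinfun.bilinear_simps)
qed

lemma continuous_on_bump_field: "continuous_on UNIV (bump_field x r k e)"
  by (intro continuous_at_imp_continuous_on ballI has_derivative_continuous[OF bump_field_has_derivative])

lemma continuous_on_bump_field_deriv: "continuous_on UNIV (bump_field_deriv x r k e)"
  unfolding bump_field_deriv_def[abs_def]
  by (intro continuous_intros continuous_on_compose2[OF continuous_on_smooth_step_deriv]
      bounded_bilinear.continuous_on[OF bounded_bilinear_blinfun_compose]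
      bounded_linear.continuous_on[OF bounded_linear_blinfun_inner_left]) auto

lemma bump_field_outside_ball:
  assumes "0 \<le> k" "0 \<le> r" "r \<le> dist y x"
  shows "bump_field x r k e y = 0" and "bump_field_deriv x r k e y = 0"
proof -
  have "r\<^sup>2 \<le> (y - x) \<bullet> (y - x)"
    using assms(2,3) power_mono[of r "dist y x" 2] by (simp add: dist_norm power2_norm_eq_inner)
  then have "k * (r\<^sup>2 - (y - x) \<bullet> (y - x)) \<le> 0"
    using assms(1) by (simp add: mult_nonneg_nonpos)
  then show "bump_field x r k e y = 0" and "bump_field_deriv x r k e y = 0"
    by (simp_all add: bump_field_def bump_field_deriv_def smooth_step_nonpos smooth_step_deriv_nonpos)
qed

lemma C1c_field_bump_field:
  assumes "0 \<le> k" "0 \<le> r"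
  shows "C1c_field (bump_field x r k e) (bump_field_deriv x r k e)"
  unfolding C1c_field_def
proof (intro conjI allI bump_field_has_derivative continuous_on_bump_field_deriv)
  have "{y. bump_field x r k e y \<noteq> 0} \<subseteq> cball x r"
    using bump_field_outside_ball(1)[OF assms] by (force simp: dist_commute)
  then have "closure {y. bump_field x r k e y \<noteq> 0} \<subseteq> cball x r"
    by (intro closure_minimal) auto
  then show "compact (closure {y. bump_field x r k e y \<noteq> 0})"
    by (meson bounded_cball bounded_subset closed_closure compact_eq_bounded_closed)
qed

lemma norm_bump_field_le: "norm (bump_field x r k e y) \<le> norm e"
  using smooth_step_bounds[of "k * (r\<^sup>2 - (y - x) \<bullet> (y - x))"]
  by (simp add: bump_field_def mult_left_le_one_le)

lemma norm_inner_bump_field_le: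
  assumes "0 \<le> k" "0 < r" "norm v \<le> 1"
  shows "norm (bump_field x r k e y \<bullet> v) \<le> norm e * indicator (cball x r) y"
proof (cases "y \<in> cball x r")
  case True
  have "norm (bump_field x r k e y \<bullet> v) \<le> norm (bump_field x r k e y) * norm v"
    using Cauchy_Schwarz_ineq2 by simp
  also have "\<dots> \<le> norm e"
    using norm_bump_field_le[of x r k e y] assms(3) by (simp add: mult_le_one order_trans[OF mult_right_le_one_le])
  finally show ?thesis
    using True by simp
next
  case False
  then show ?thesis
    using bump_field_outside_ball(1)[of k r y x e] assms(1,2) by (simp add: dist_commute)
qed

lemma bump_field_tendsto_indicator:
  assumes "0 < r"
  shows "(\<lambda>n. bump_field x r (real n) e y) \<longlonglongrightarrow> indicator (ball x r) y *\<^sub>R e"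
proof (cases "y \<in> ball x r")
  case True
  have "(y - x) \<bullet> (y - x) = (dist x y)\<^sup>2"
    by (metis dist_commute dist_norm power2_norm_eq_inner)
  then have "(y - x) \<bullet> (y - x) < r\<^sup>2"
    using True power_strict_mono[of "dist x y" r 2] by simp
  then have pos: "0 < r\<^sup>2 - (y - x) \<bullet> (y - x)" by simp
  obtain N :: nat where N: "1 / (r\<^sup>2 - (y - x) \<bullet> (y - x)) < real N"
    using reals_Archimedean2 by blast
  have "eventually (\<lambda>n. bump_field x r (real n) e y = e) sequentially"
  proof (rule eventually_sequentiallyI[of N])
    fix n assume "N \<le> n"
    then have "1 / (r\<^sup>2 - (y - x) \<bullet> (y - x)) < real n" using N by linarith
    then have "1 \<le> real n * (r\<^sup>2 - (y - x) \<bullet> (y - x))" using pos by (simp add: field_simps)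
    then show "bump_field x r (real n) e y = e" by (simp add: bump_field_def smooth_step_ge_1)
  qed
  then show ?thesis using True by (simp add: tendsto_eventually)
next
  case False
  then have "bump_field x r (real n) e y = 0" for n
    using bump_field_outside_ball(1)[of "real n" r y x] assms by (simp add: dist_commute)
  then show ?thesis using False by simp
qed

lemma gradient_rep_integral_bump_field_eq_0:
  fixes \<Omega> :: "'a::euclidean_space set"
  assumes rep: "gradient_rep \<Omega> \<mu> \<sigma>" and null: "\<Omega> \<inter> ball x \<epsilon> \<in> null_sets lebesgue"
    and k: "0 \<le> k" and r: "0 \<le> r" "r \<le> \<epsilon>"
  shows "(\<integral>y. bump_field x r k e y \<bullet> \<sigma> y \<partial>\<mu>) = 0"
proof -
  have "(\<integral>y. bump_field x r k e y \<bullet> \<sigma> y \<partial>\<mu>) =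
      - (\<integral>y. indicator \<Omega> y * divergence (bump_field_deriv x r k e) y \<partial>lebesgue)"
    using rep C1c_field_bump_field[OF k r(1)] unfolding gradient_rep_def by blast
  also have "(\<integral>y. indicator \<Omega> y * divergence (bump_field_deriv x r k e) y \<partial>lebesgue) = 0"
  proof (rule integral_eq_zero_AE, rule AE_I'[OF null], rule subsetI)
    fix y assume "y \<in> {y \<in> space lebesgue. indicator \<Omega> y * divergence (bump_field_deriv x r k e) y \<noteq> 0}"
    then have "y \<in> \<Omega>" and "bump_field_deriv x r k e y \<noteq> 0"
      by (auto simp: indicator_def divergence_def split: if_splits)
    then show "y \<in> \<Omega> \<inter> ball x \<epsilon>"
      using bump_field_outside_ball(2)[OF k r(1), of y] r(2) by (force simp: dist_commute)
  qed
  finally show ?thesis by simp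
qed

lemma gradient_rep_tendsto_integral_bump_field:
  fixes \<Omega> :: "'a::euclidean_space set"
  assumes rep: "gradient_rep \<Omega> \<mu> \<sigma>" and r: "0 < r"
  shows "(\<lambda>n. \<integral>y. bump_field x r (real n) e y \<bullet> \<sigma> y \<partial>\<mu>) \<longlonglongrightarrow>
    (\<integral>y. indicator (ball x r) y *\<^sub>R \<sigma> y \<partial>\<mu>) \<bullet> e"
proof -
  from rep have sets: "sets \<mu> = sets borel" and finite: "\<And>K. compact K \<Longrightarrow> emeasure \<mu> K < \<infinity>"
    and [measurable]: "\<sigma> \<in> borel_measurable \<mu>" and unit: "AE y in \<mu>. norm (\<sigma> y) = 1"
    unfolding gradient_rep_def by blast+
  have [measurable]: "ball x r \<in> sets \<mu>" "cball x r \<in> sets \<mu>"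
    using sets by auto
  have [measurable]: "bump_field x r (real n) e \<in> borel_measurable \<mu>" for n
    using borel_measurable_continuous_onI[OF continuous_on_bump_field]
    by (simp add: measurable_cong_sets[OF sets refl])
  have cball: "integrable \<mu> (indicator (cball x r) :: 'a \<Rightarrow> real)"
    using finite[of "cball x r"] by (intro integrable_real_indicator) auto
  have "integrable \<mu> (\<lambda>y. indicator (ball x r) y *\<^sub>R \<sigma> y)"
    by (rule Bochner_Integration.integrable_bound[OF cball], measurable)
      (use unit in \<open>auto elim!: eventually_mono simp: indicator_def\<close>)
  then have "(\<integral>y. indicator (ball x r) y *\<^sub>R \<sigma> y \<partial>\<mu>) \<bullet> e =
      (\<integral>y. (indicator (ball x r) y *\<^sub>R e) \<bullet> \<sigma> y \<partial>\<mu>)"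
    using integral_inner_left[of e \<mu> "\<lambda>y. indicator (ball x r) y *\<^sub>R \<sigma> y"]
    by (simp add: inner_commute)
  moreover have "(\<lambda>n. \<integral>y. bump_field x r (real n) e y \<bullet> \<sigma> y \<partial>\<mu>) \<longlonglongrightarrow>
      (\<integral>y. (indicator (ball x r) y *\<^sub>R e) \<bullet> \<sigma> y \<partial>\<mu>)"
  proof (rule integral_dominated_convergence[where w="\<lambda>y. norm e * indicator (cball x r) y"])
    show "AE y in \<mu>. (\<lambda>n. bump_field x r (real n) e y \<bullet> \<sigma> y) \<longlonglongrightarrow> (indicator (ball x r) y *\<^sub>R e) \<bullet> \<sigma> y"
      using r by (intro AE_I2 tendsto_inner bump_field_tendsto_indicator tendsto_const)
    show "AE y in \<mu>. norm (bump_field x r (real n) e y \<bullet> \<sigma> y) \<le> norm e * indicator (cball x r) y" for n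
      using unit by eventually_elim (rule norm_inner_bump_field_le[OF _ r]; simp)
  qed (use cball in simp_all)
  ultimately show ?thesis by simp
qed

lemma reduced_boundary_ball_not_null:
  fixes \<Omega> :: "'a::euclidean_space set"
  assumes x: "x \<in> reduced_boundary \<Omega>" and \<epsilon>: "0 < \<epsilon>"
  shows "\<Omega> \<inter> ball x \<epsilon> \<notin> null_sets lebesgue"
proof
  assume null: "\<Omega> \<inter> ball x \<epsilon> \<in> null_sets lebesgue"
  from x obtain \<mu> \<sigma> N where rep: "gradient_rep \<Omega> \<mu> \<sigma>" and N: "norm N = 1"
    and lim: "((\<lambda>r. - ((1 / measure \<mu> (ball x r)) *\<^sub>R (\<integral>y. indicator (ball x r) y *\<^sub>R \<sigma> y \<partial>\<mu>))) \<longlongrightarrow> N)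
      (at_right 0)"
    unfolding reduced_boundary_def by blast
  have zero: "(\<integral>y. indicator (ball x r) y *\<^sub>R \<sigma> y \<partial>\<mu>) = 0" if r: "0 < r" "r < \<epsilon>" for r
  proof (rule euclidean_eqI)
    fix e :: 'a
    have "(\<lambda>n. \<integral>y. bump_field x r (real n) e y \<bullet> \<sigma> y \<partial>\<mu>) \<longlonglongrightarrow> 0"
      using gradient_rep_integral_bump_field_eq_0[OF rep null, of "real _" r e] r by simp
    with gradient_rep_tendsto_integral_bump_field[OF rep r(1), of x e]
    show "(\<integral>y. indicator (ball x r) y *\<^sub>R \<sigma> y \<partial>\<mu>) \<bullet> e = 0 \<bullet> e"
      using LIMSEQ_unique by auto
  qed
  have "((\<lambda>r. - ((1 / measure \<mu> (ball x r)) *\<^sub>R (\<integral>y. indicator (ball x r) y *\<^sub>R \<sigma> y \<partial>\<mu>))) \<longlongrightarrow> 0)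
      (at_right 0)"
    by (rule tendsto_eventually)
      (use eventually_at_right_real[OF \<epsilon>] in \<open>eventually_elim, simp add: zero\<close>)
  with lim have "N = 0"
    using tendsto_unique trivial_limit_at_right_real by blast
  with N show False by simp
qed

section \<open>Exchanging mass between two parts of a partition\<close>

definition exchange :: "(nat \<Rightarrow> 'a set) \<Rightarrow> nat \<Rightarrow> nat \<Rightarrow> 'a set \<Rightarrow> 'a set \<Rightarrow> nat \<Rightarrow> 'a set" where
  "exchange \<Omega> i j A B k =
     (if k = i then (\<Omega> i \<union> A) - B else if k = j then (\<Omega> j - A) \<union> B else \<Omega> k)"

lemma is_partitionD:
  assumes "is_partition m \<Omega>"
  shows "k < m \<Longrightarrow> \<Omega> k \<in> sets lebesgue"
    and "k < m \<Longrightarrow> l < m \<Longrightarrow> k \<noteq> l \<Longrightarrow> \<Omega> k \<inter> \<Omega> l = {}"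
    and "\<exists>k<m. y \<in> \<Omega> k"
  using assms unfolding is_partition_def by blast+

context
  fixes \<Omega> :: "nat \<Rightarrow> 'a::euclidean_space set" and m i j :: nat and A B :: "'a set"
  assumes partition: "is_partition m \<Omega>" and ij: "i < m" "j < m" "i \<noteq> j"
    and A: "A \<subseteq> \<Omega> j" and B: "B \<subseteq> \<Omega> i"
begin

lemma mem_exchange:
  assumes "k < m"
  shows "y \<in> exchange \<Omega> i j A B k \<longleftrightarrow> (if y \<in> A then k = i else if y \<in> B then k = j else y \<in> \<Omega> k)"
  using is_partitionD(2)[OF partition assms ij(2)] is_partitionD(2)[OF partition assms ij(1)]
    is_partitionD(2)[OF partition ij] A B
  by (auto simp: exchange_def; blast)

lemma is_partition_exchange:
  assumes "A \<in> sets lebesgue" "B \<in> sets lebesgue"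
  shows "is_partition m (exchange \<Omega> i j A B)"
  unfolding is_partition_def
proof (intro conjI allI impI)
  show "exchange \<Omega> i j A B k \<in> sets lebesgue" if "k < m" for k
    using is_partitionD(1)[OF partition] ij that assms unfolding exchange_def by auto
  show "exchange \<Omega> i j A B k \<inter> exchange \<Omega> i j A B l = {}" if "k < m" "l < m" "k \<noteq> l" for k l
    using mem_exchange[OF that(1)] mem_exchange[OF that(2)] is_partitionD(2)[OF partition that] that(3)
    by (auto split: if_splits; blast)
  have "\<exists>k<m. y \<in> exchange \<Omega> i j A B k" for y
  proof -
    obtain k where "k < m" "y \<in> \<Omega> k"
      using is_partitionD(3)[OF partition] by blast
    then show ?thesis
      using mem_exchange ij by (metis (full_types))
  qed
  then show "(\<Union>k<m. exchange \<Omega> i j A B k) = UNIV"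
    by blast
qed

lemma indicator_exchange:
  assumes "k < m"
  shows "(indicator (exchange \<Omega> i j A B k) y :: real) =
    indicator (\<Omega> k) y + (if k = i then 1 else if k = j then -1 else 0) * (indicator A y - indicator B y)"
proof -
  have "y \<notin> \<Omega> l" if "y \<in> \<Omega> k'" "k' < m" "l < m" "l \<noteq> k'" for k' l
    using is_partitionD(2)[OF partition that(2,3)] that by blast
  then show ?thesis
    using mem_exchange[OF assms, of y] A B ij assms
    by (cases "y \<in> A"; cases "y \<in> B") (auto simp: indicator_def)
qed

lemma gauss_measure_exchange:
  assumes [measurable]: "A \<in> sets lebesgue" "B \<in> sets lebesgue" and k: "k < m"
  shows "gauss_measure (exchange \<Omega> i j A B k) =
    gauss_measure (\<Omega> k) + (if k = i then 1 else if k = j then -1 else 0) * (gauss_measure A - gauss_measure B)"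
proof -
  have [measurable]: "\<Omega> k \<in> sets lebesgue"
    by (rule is_partitionD(1)[OF partition k])
  show ?thesis
    unfolding gauss_measure_def indicator_exchange[OF k] distrib_right left_diff_distrib mult.assoc
    using integrable_indicator_gauss_dens[of "\<Omega> k"] integrable_indicator_gauss_dens[of A]
      integrable_indicator_gauss_dens[of B]
    by simp
qed

lemma noise_stab_exchange:
  assumes [measurable]: "A \<in> sets lebesgue" "B \<in> sets lebesgue" and abs_rho: "\<bar>\<rho>\<bar> < 1"
  shows "noise_stab \<rho> m (exchange \<Omega> i j A B) = noise_stab \<rho> m \<Omega>
    + 2 * ou_pairing \<rho> (\<lambda>y. indicator A y - indicator B y) (\<lambda>y. indicator (\<Omega> i) y - indicator (\<Omega> j) y)
    + 2 * ou_pairing \<rho> (\<lambda>y. indicator A y - indicator B y) (\<lambda>y. indicator A y - indicator B y)"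
proof -
  define g :: "'a \<Rightarrow> real" where "g = (\<lambda>y. indicator A y - indicator B y)"
  define c :: "nat \<Rightarrow> real" where "c k = (if k = i then 1 else if k = j then -1 else 0)" for k
  let ?P = "ou_pairing \<rho>"
  have [measurable]: "\<Omega> k \<in> sets lebesgue" if "k < m" for k
    by (rule is_partitionD(1)[OF partition that])
  have g_measurable: "g \<in> borel_measurable lebesgue"
    unfolding g_def by measurable
  have g_bound: "\<bar>g y\<bar> \<le> 1" for y
    by (simp add: g_def indicator_def)
  have indicator_bound: "\<bar>indicator S y :: real\<bar> \<le> 1" for S and y :: 'a
    by (simp add: indicator_def)
  have "?P (indicator (exchange \<Omega> i j A B k)) (indicator (exchange \<Omega> i j A B k)) =
      ?P (indicator (\<Omega> k)) (indicator (\<Omega> k)) + (2 * c k * ?P g (indicator (\<Omega> k)) + (c k)\<^sup>2 * ?P g g)"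
    if k: "k < m" for k
  proof -
    have "indicator (exchange \<Omega> i j A B k) = (\<lambda>y. indicator (\<Omega> k) y + c k * g y)"
      using indicator_exchange[OF k] by (auto simp: c_def g_def)
    moreover have indicator_measurable: "indicator (\<Omega> k) \<in> borel_measurable lebesgue"
      using k by measurable
    ultimately show ?thesis
      using ou_pairing_expand[where c="c k", OF abs_rho indicator_measurable g_measurable indicator_bound g_bound]
      by simp
  qed
  then have "noise_stab \<rho> m (exchange \<Omega> i j A B) = noise_stab \<rho> m \<Omega> +
      (\<Sum>k<m. 2 * c k * ?P g (indicator (\<Omega> k)) + (c k)\<^sup>2 * ?P g g)"
    by (simp add: noise_stab_eq_sum_ou_pairing sum.distrib)
  also have "(\<Sum>k<m. 2 * c k * ?P g (indicator (\<Omega> k)) + (c k)\<^sup>2 * ?P g g) =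
      (\<Sum>k\<in>{i, j}. 2 * c k * ?P g (indicator (\<Omega> k)) + (c k)\<^sup>2 * ?P g g)"
    by (rule sum.mono_neutral_right) (use ij in \<open>auto simp: c_def\<close>)
  also have "\<dots> = 2 * (?P g (indicator (\<Omega> i)) - ?P g (indicator (\<Omega> j))) + 2 * ?P g g"
    using ij(3) by (simp add: c_def algebra_simps)
  also have "?P g (indicator (\<Omega> i)) - ?P g (indicator (\<Omega> j)) =
      ?P g (\<lambda>y. indicator (\<Omega> i) y - indicator (\<Omega> j) y)"
    using ij by (intro ou_pairing_diff_right[OF abs_rho, symmetric] g_measurable g_bound indicator_bound)
      simp_all
  finally show ?thesis
    by (simp add: g_def)
qed

end

section \<open>Maximizers of the noise stability\<close>

lemma continuous_at_common_radius:
  fixes f :: "'a::metric_space \<Rightarrow> real"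
  assumes "continuous (at x1) f" "continuous (at x2) f" "0 < \<delta>"
  obtains r where "0 < r" "\<And>y. dist y x1 < r \<Longrightarrow> f x1 - \<delta> \<le> f y"
    "\<And>y. dist y x2 < r \<Longrightarrow> f y \<le> f x2 + \<delta>"
proof -
  obtain r1 where r1: "0 < r1" "\<And>y. dist y x1 < r1 \<Longrightarrow> dist (f y) (f x1) < \<delta>"
    using assms(1,3) unfolding continuous_at_eps_delta by blast
  obtain r2 where r2: "0 < r2" "\<And>y. dist y x2 < r2 \<Longrightarrow> dist (f y) (f x2) < \<delta>"
    using assms(2,3) unfolding continuous_at_eps_delta by blast
  show ?thesis
  proof (rule that[of "min r1 r2"])
    show "f x1 - \<delta> \<le> f y" if "dist y x1 < min r1 r2" for y
      using r1(2)[of y] that by (simp add: dist_real_def)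
    show "f y \<le> f x2 + \<delta>" if "dist y x2 < min r1 r2" for y
      using r2(2)[of y] that by (simp add: dist_real_def)
  qed (simp add: r1 r2)
qed

definition noise_stab_maximizer ::
    "real \<Rightarrow> nat \<Rightarrow> (nat \<Rightarrow> real) \<Rightarrow> (nat \<Rightarrow> 'a::euclidean_space set) \<Rightarrow> bool" where
  "noise_stab_maximizer \<rho> m a \<Omega> \<longleftrightarrow>
     is_partition m \<Omega> \<and> (\<forall>i<m. gauss_measure (\<Omega> i) = a i) \<and>
     (\<forall>\<Theta> :: nat \<Rightarrow> 'a set. is_partition m \<Theta> \<and> (\<forall>i<m. gauss_measure (\<Theta> i) = a i) \<longrightarrow>
        noise_stab \<rho> m \<Theta> \<le> noise_stab \<rho> m \<Omega>)"

lemma exists_equal_gauss_measure_subsets_near: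
  fixes S T :: "'a::euclidean_space set"
  assumes S: "S \<in> sets lebesgue" "x \<in> reduced_boundary S"
    and T: "T \<in> sets lebesgue" "y \<in> reduced_boundary T"
    and "0 < r" "0 < \<tau>"
  obtains t A B where "0 < t" "t \<le> \<tau>"
    "A \<subseteq> S \<inter> ball x r" "A \<in> sets lebesgue" "gauss_measure A = t"
    "B \<subseteq> T \<inter> ball y r" "B \<in> sets lebesgue" "gauss_measure B = t"
proof -
  define t where "t = min (min (gauss_measure (S \<inter> ball x r)) (gauss_measure (T \<inter> ball y r))) \<tau>"
  have "0 < gauss_measure (S \<inter> ball x r)" "0 < gauss_measure (T \<inter> ball y r)"
    using S T reduced_boundary_ball_not_null[OF S(2) \<open>0 < r\<close>]
      reduced_boundary_ball_not_null[OF T(2) \<open>0 < r\<close>]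
    by (auto intro!: gauss_measure_pos)
  then have t: "0 < t" "t \<le> \<tau>" "t \<le> gauss_measure (S \<inter> ball x r)" "t \<le> gauss_measure (T \<inter> ball y r)"
    using \<open>0 < \<tau>\<close> by (auto simp: t_def)
  obtain \<epsilon> where "0 \<le> \<epsilon>" "\<epsilon> \<le> r" "gauss_measure (S \<inter> ball x \<epsilon>) = t"
    using exists_radius_gauss_measure_ball_eq[OF S(1), of r t x] t \<open>0 < r\<close> by auto
  moreover obtain \<delta> where "0 \<le> \<delta>" "\<delta> \<le> r" "gauss_measure (T \<inter> ball y \<delta>) = t"
    using exists_radius_gauss_measure_ball_eq[OF T(1), of r t y] t \<open>0 < r\<close> by auto
  ultimately show ?thesis
    using S(1) T(1) t subset_ball[of \<epsilon> r x] subset_ball[of \<delta> r y]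
    by (intro that[of t "S \<inter> ball x \<epsilon>" "T \<inter> ball y \<delta>"]) auto
qed

lemma noise_stab_maximizer_exchange_le:
  fixes \<Omega> :: "nat \<Rightarrow> 'a::euclidean_space set"
  assumes abs_rho: "\<bar>\<rho>\<bar> < 1" and maximizer: "noise_stab_maximizer \<rho> m a \<Omega>"
    and ij: "i < m" "j < m" "i \<noteq> j"
    and A: "A \<subseteq> \<Omega> j" "A \<in> sets lebesgue" and B: "B \<subseteq> \<Omega> i" "B \<in> sets lebesgue"
    and AB: "gauss_measure A = gauss_measure B"
  shows "ou_pairing \<rho> (\<lambda>y. indicator A y - indicator B y) (\<lambda>y. indicator (\<Omega> i) y - indicator (\<Omega> j) y)
    + ou_pairing \<rho> (\<lambda>y. indicator A y - indicator B y) (\<lambda>y. indicator A y - indicator B y) \<le> 0"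
proof -
  have partition: "is_partition m \<Omega>" and measures: "\<forall>k<m. gauss_measure (\<Omega> k) = a k"
    using maximizer by (simp_all add: noise_stab_maximizer_def)
  have "is_partition m (exchange \<Omega> i j A B)"
    by (rule is_partition_exchange[OF partition ij A(1) B(1) A(2) B(2)])
  moreover have "\<forall>k<m. gauss_measure (exchange \<Omega> i j A B k) = a k"
    using gauss_measure_exchange[OF partition ij A(1) B(1) A(2) B(2)] measures AB by simp
  ultimately have "noise_stab \<rho> m (exchange \<Omega> i j A B) \<le> noise_stab \<rho> m \<Omega>"
    using maximizer by (simp add: noise_stab_maximizer_def)
  then show ?thesis
    using noise_stab_exchange[OF partition ij A(1) B(1) A(2) B(2) abs_rho] by simp
qed

lemma noise_stab_maximizer_exchange_bound:
  fixes \<Omega> :: "nat \<Rightarrow> 'a::euclidean_space set"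
  assumes abs_rho: "\<bar>\<rho>\<bar> < 1" and maximizer: "noise_stab_maximizer \<rho> m a \<Omega>"
    and ij: "i < m" "j < m" "i \<noteq> j"
    and A: "A \<subseteq> \<Omega> j \<inter> ball x1 r" "A \<in> sets lebesgue" "gauss_measure A = t"
    and B: "B \<subseteq> \<Omega> i \<inter> ball x2 r" "B \<in> sets lebesgue" "gauss_measure B = t"
    and near_x1: "\<And>y. y \<in> ball x1 r \<Longrightarrow> \<alpha> \<le> ou_op \<rho> (\<lambda>y. indicator (\<Omega> i) y - indicator (\<Omega> j) y) y"
    and near_x2: "\<And>y. y \<in> ball x2 r \<Longrightarrow> ou_op \<rho> (\<lambda>y. indicator (\<Omega> i) y - indicator (\<Omega> j) y) y \<le> \<beta>"
  shows "(\<alpha> - \<beta>) * t \<le> 4 * (exp ((norm x1 + norm x2 + r)\<^sup>2 / 2) / sqrt (1 - \<rho>\<^sup>2) ^ DIM('a)) * t\<^sup>2"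
proof -
  define h :: "'a \<Rightarrow> real" where "h = (\<lambda>y. indicator (\<Omega> i) y - indicator (\<Omega> j) y)"
  define g :: "'a \<Rightarrow> real" where "g = (\<lambda>y. indicator A y - indicator B y)"
  have partition: "is_partition m \<Omega>"
    using maximizer by (simp add: noise_stab_maximizer_def)
  have [measurable]: "\<Omega> i \<in> sets lebesgue" "\<Omega> j \<in> sets lebesgue" and "\<Omega> i \<inter> \<Omega> j = {}"
    using is_partitionD[OF partition] ij by auto
  then have disjoint: "A \<inter> B = {}"
    using A B by blast
  have "\<alpha> * gauss_measure A - \<beta> * gauss_measure B \<le> ou_pairing \<rho> g h"
    unfolding g_def
    by (rule ou_pairing_indicator_diff_ge[OF abs_rho A(2) B(2)])
      (use A B near_x1[folded h_def] near_x2[folded h_def] in \<open>auto simp: h_def indicator_def\<close>)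
  then have "(\<alpha> - \<beta>) * t \<le> ou_pairing \<rho> g h"
    using A(3) B(3) by (simp add: left_diff_distrib)
  also have "\<dots> \<le> - ou_pairing \<rho> g g"
    using noise_stab_maximizer_exchange_le[OF abs_rho maximizer ij, of A B] A B
    unfolding g_def h_def by auto
  also have "\<dots> \<le> exp ((norm x1 + norm x2 + r)\<^sup>2 / 2) / sqrt (1 - \<rho>\<^sup>2) ^ DIM('a) * (t + t)\<^sup>2"
    using abs_ou_pairing_indicator_diff_le[OF abs_rho A(2) B(2) disjoint, of x1 r x2] A B
    unfolding g_def by auto
  finally show ?thesis
    by (simp add: power2_eq_square ac_simps)
qed

lemma noise_stab_maximizer_ou_op_le:
  fixes \<Omega> :: "nat \<Rightarrow> 'a::euclidean_space set"
  assumes abs_rho: "\<bar>\<rho>\<bar> < 1" and maximizer: "noise_stab_maximizer \<rho> m a \<Omega>"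
    and ij: "i < m" "j < m" "i \<noteq> j"
    and x1: "x1 \<in> reduced_boundary (\<Omega> j)" and x2: "x2 \<in> reduced_boundary (\<Omega> i)"
  shows "ou_op \<rho> (\<lambda>y. indicator (\<Omega> i) y - indicator (\<Omega> j) y) x1 \<le>
    ou_op \<rho> (\<lambda>y. indicator (\<Omega> i) y - indicator (\<Omega> j) y) x2"
proof (rule ccontr)
  define f where "f = ou_op \<rho> (\<lambda>y. indicator (\<Omega> i) y - indicator (\<Omega> j) y :: real)"
  assume "\<not> ?thesis"
  then have "f x2 < f x1"
    by (simp add: f_def)
  define \<delta> where "\<delta> = (f x1 - f x2) / 3"
  have \<delta>: "0 < \<delta>"
    using \<open>f x2 < f x1\<close> by (simp add: \<delta>_def)
  have partition: "is_partition m \<Omega>"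
    using maximizer by (simp add: noise_stab_maximizer_def)
  have [measurable]: "\<Omega> i \<in> sets lebesgue" and \<Omega>_j [measurable]: "\<Omega> j \<in> sets lebesgue"
    using is_partitionD(1)[OF partition] ij by auto
  have "continuous (at x) f" for x
    unfolding f_def by (rule continuous_ou_op[OF abs_rho], measurable) (simp add: indicator_def)
  then obtain r where r: "0 < r" and near_x1: "\<And>y. dist y x1 < r \<Longrightarrow> f x1 - \<delta> \<le> f y"
    and near_x2: "\<And>y. dist y x2 < r \<Longrightarrow> f y \<le> f x2 + \<delta>"
    using continuous_at_common_radius[OF _ _ \<delta>, of x1 f x2] by blast
  define C where "C = exp ((norm x1 + norm x2 + r)\<^sup>2 / 2) / sqrt (1 - \<rho>\<^sup>2) ^ DIM('a)"
  have C: "0 < C"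
    using sqrt_one_minus_rho_square_pos[OF abs_rho] by (simp add: C_def)
  obtain t A B where t: "0 < t" "t \<le> \<delta> / (8 * C)"
    and A: "A \<subseteq> \<Omega> j \<inter> ball x1 r" "A \<in> sets lebesgue" "gauss_measure A = t"
    and B: "B \<subseteq> \<Omega> i \<inter> ball x2 r" "B \<in> sets lebesgue" "gauss_measure B = t"
    using exists_equal_gauss_measure_subsets_near[where T="\<Omega> i" and \<tau>="\<delta> / (8 * C)", OF \<Omega>_j x1 _ x2 r] \<delta> C
    by auto
  have "y \<in> ball x1 r \<Longrightarrow> f x1 - \<delta> \<le> f y" "y \<in> ball x2 r \<Longrightarrow> f y \<le> f x2 + \<delta>" for y
    using near_x1 near_x2 by (simp_all add: dist_commute)
  then have "((f x1 - \<delta>) - (f x2 + \<delta>)) * t \<le> 4 * C * t\<^sup>2"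
    unfolding C_def f_def by (rule noise_stab_maximizer_exchange_bound[OF abs_rho maximizer ij A B])
  also have "\<dots> \<le> \<delta> * t / 2"
    using t C by (simp add: field_simps power2_eq_square mult_right_mono)
  finally show False
    using \<delta> t(1) by (simp add: \<delta>_def field_simps)
qed

theorem lemma3p2:
  fixes \<rho> :: real and m :: nat and a :: "nat \<Rightarrow> real"
    and \<Omega> :: "nat \<Rightarrow> 'a::euclidean_space set"
  assumes "0 < \<rho>" "\<rho> < 1"
    and "DIM('a) \<ge> 2"
    and "m \<ge> 2"
    and "\<forall>i<m. a i > 0" "(\<Sum>i<m. a i) = 1"
    and "is_partition m \<Omega>" "\<forall>i<m. gauss_measure (\<Omega> i) = a i"
    and "\<forall>\<Theta> :: nat \<Rightarrow> 'a set. is_partition m \<Theta> \<and> (\<forall>i<m. gauss_measure (\<Theta> i) = a i)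
           \<longrightarrow> noise_stab \<rho> m \<Theta> \<le> noise_stab \<rho> m \<Omega>"
  shows "\<forall>i j. i < j \<and> j < m \<longrightarrow>
           (\<exists>c::real. \<forall>x \<in> reduced_boundary (\<Omega> i) \<inter> reduced_boundary (\<Omega> j).
              ou_op \<rho> (\<lambda>y. indicator (\<Omega> i) y - indicator (\<Omega> j) y) x = c)"
proof (intro allI impI)
  fix i j assume ij: "i < j \<and> j < m"
  let ?\<Sigma> = "reduced_boundary (\<Omega> i) \<inter> reduced_boundary (\<Omega> j)"
  let ?f = "ou_op \<rho> (\<lambda>y. indicator (\<Omega> i) y - indicator (\<Omega> j) y)"
  have abs_rho: "\<bar>\<rho>\<bar> < 1"
    using assms(1,2) by simp
  have maximizer: "noise_stab_maximizer \<rho> m a \<Omega>"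
    unfolding noise_stab_maximizer_def using assms(7-9) by blast
  have "?f x \<le> ?f y" if "x \<in> ?\<Sigma>" "y \<in> ?\<Sigma>" for x y
    using that ij by (intro noise_stab_maximizer_ou_op_le[OF abs_rho maximizer]) auto
  then have "\<forall>x \<in> ?\<Sigma>. ?f x = ?f y" if "y \<in> ?\<Sigma>" for y
    using that by (blast intro: order.antisym)
  then show "\<exists>c. \<forall>x \<in> ?\<Sigma>. ?f x = c"
    by (cases "?\<Sigma> = {}") blast+
qed

end
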